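(* Let $n\ge2$ and $x_j:=-\cos\frac{j\pi}{n}$ for $0\le j\le n$. For every integer $k$ with $1\le k\le n/2$, \[ \sum_{j=0}^{k-1}\frac{1}{x_k-x_j}\le\frac{1+k\log(4k-1)}{2\sin\frac{k\pi}{n}\,\sin\frac{k\pi}{2n}}\le\frac{n^2}{4\sqrt2\,k^2}\bigl(1+k\log(4k-1)\bigr) \] and \[ \sum_{j=k+1}^{n}\frac{1}{x_j-x_k}\le\frac{3n^2}{4\sqrt2\,k}\log(4k+1). \] In particular, for such $k$, $\sum_{j\neq k}\frac{1}{|x_k-x_j|}\le\frac{n^2}{4\sqrt2}(1+\log3+3\log5)<1.3\,n^2$. Moreover, $\sum_{j=1}^n\frac{1}{x_j-x_0}\le\frac{\pi^2n^2}{12}<0.9\,n^2$.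
   Context: $\log$ denotes the natural logarithm. *)

theory Defs
  imports "HOL-Analysis.Analysis"
begin

definition cheb_node :: "nat \<Rightarrow> nat \<Rightarrow> real" where
  "cheb_node n j = - cos (real j * pi / real n)"

end

theory Submission
  imports Defs
begin

text \<open>
  By the sum-to-product formula, \<open>x\<^sub>i - x\<^sub>j = 2 sin ((i+j)\<pi>/2n) sin ((i-j)\<pi>/2n)\<close>.
  Since \<open>sin t / t\<close> decreases on \<open>[0, \<pi>]\<close>, each factor is at least its argument times
  the slope of the chord of the sine at the largest argument that occurs
  (\<open>k\<pi>/n\<close> and \<open>k\<pi>/2n\<close> for \<open>j < k\<close>, \<open>3\<pi>/4\<close> and \<open>\<pi>/2\<close> for \<open>j > k\<close>).
  This bounds \<open>1/(x\<^sub>k - x\<^sub>j)\<close> by a multiple of \<open>1/(k-j) \<plusminus> 1/(k+j)\<close>, whose sums are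
  differences of harmonic numbers, and \<open>H\<^sub>m \<le> ln (2m+1)\<close>.  For \<open>k = 0\<close> the same bound
  gives \<open>n\<^sup>2/(2j\<^sup>2)\<close>, summed by \<open>\<Sum> 1/j\<^sup>2 = \<pi>\<^sup>2/6\<close>.
\<close>

lemma mult_cos_le_sin:
  fixes x :: real
  assumes "0 \<le> x" "x \<le> pi"
  shows "x * cos x \<le> sin x"
proof -
  have "(\<lambda>x. sin x - x * cos x) 0 \<le> (\<lambda>x. sin x - x * cos x) x"
  proof (rule DERIV_nonneg_imp_nondecreasing[OF assms(1)])
    fix y :: real
    assume y: "0 \<le> y" "y \<le> x"
    have "DERIV (\<lambda>x. sin x - x * cos x) y :> y * sin y"
      by (auto intro!: derivative_eq_intros simp: algebra_simps)
    moreover have "y * sin y \<ge> 0"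
      using y assms by (intro mult_nonneg_nonneg sin_ge_zero) auto
    ultimately show "\<exists>d. DERIV (\<lambda>x. sin x - x * cos x) y :> d \<and> d \<ge> 0" by blast
  qed
  then show ?thesis by simp
qed

lemma sin_div_self_antimono:
  fixes s t :: real
  assumes "0 < s" "s \<le> t" "t \<le> pi"
  shows "sin t / t \<le> sin s / s"
proof (rule DERIV_nonpos_imp_nonincreasing[OF assms(2), of "\<lambda>x. sin x / x", simplified])
  fix y :: real
  assume y: "s \<le> y" "y \<le> t"
  have "DERIV (\<lambda>x. sin x / x) y :> (y * cos y - sin y) / y\<^sup>2"
    using y assms by (auto intro!: derivative_eq_intros simp: power2_eq_square algebra_simps)
  moreover have "(y * cos y - sin y) / y\<^sup>2 \<le> 0"
    using mult_cos_le_sin[of y] y assms by (intro divide_nonpos_nonneg) auto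
  ultimately show "\<exists>d. DERIV (\<lambda>x. sin x / x) y :> d \<and> d \<le> 0" by blast
qed

lemma sin_ge_chord:
  fixes x a :: real
  assumes "0 \<le> x" "x \<le> a" "a \<le> pi"
  shows "sin a / a * x \<le> sin x"
proof (cases "x = 0")
  case False
  then have "sin a / a \<le> sin x / x"
    using assms by (intro sin_div_self_antimono) auto
  then show ?thesis
    using False assms by (simp add: pos_le_divide_eq)
qed simp

lemma harm_le_ln: "harm m \<le> ln (2 * real m + 1)"
proof (induction m)
  case (Suc m)
  have "2 * ((2 * real m + 3) - (2 * real m + 1)) / ((2 * real m + 1) + (2 * real m + 3))
          \<le> ln (2 * real m + 3) - ln (2 * real m + 1)"
    by (rule ln_inverse_approx_ge) auto
  then have "inverse (real (Suc m)) \<le> ln (2 * real m + 3) - ln (2 * real m + 1)"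
    by (simp add: field_simps)
  with Suc show ?case
    by (simp add: harm_Suc algebra_simps)
qed (simp add: harm_def)

lemma sum_inverse_diff_eq_harm: "(\<Sum>j<k. 1 / (real k - real j)) = harm k"
proof -
  have "(\<Sum>j<k. 1 / (real k - real j)) = (\<Sum>j<k. 1 / real (Suc (k - Suc j)))"
    by (intro sum.cong) auto
  also have "\<dots> = (\<Sum>j<k. inverse (real (Suc j)))"
    by (subst sum.nat_diff_reindex) (simp add: divide_inverse)
  finally show ?thesis
    by (simp add: harm_altdef)
qed

lemma sum_inverse_add_eq_harm_diff: "(\<Sum>j<m. 1 / (real p + real j + 1)) = harm (p + m) - harm p"
proof (induction m)
  case (Suc m)
  have "harm (p + Suc m) = harm (p + m) + 1 / (real p + real m + 1)"
    by (simp add: harm_Suc divide_inverse add_ac)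
  with Suc show ?case by simp
qed simp

lemma sum_inverse_diff_minus_inverse_add:
  "(\<Sum>j\<in>{k+1..k+m}. 1 / (real j - real k) - 1 / (real j + real k)) = harm m + harm (2 * k) - harm (m + 2 * k)"
proof (induction m)
  case (Suc m)
  have "harm (Suc m + 2 * k) = harm (m + 2 * k) + 1 / (real m + 2 * real k + 1)"
    by (simp add: harm_Suc divide_inverse add_ac)
  moreover have "harm (Suc m) = harm m + 1 / (real m + 1)"
    by (simp add: harm_Suc divide_inverse add_ac)
  ultimately show ?case
    using Suc by (simp add: algebra_simps)
qed (simp add: harm_def)

lemma sum_inverse_diff_plus_inverse_add_le:
  assumes "1 \<le> k"
  shows "(\<Sum>j<k. 1 / (real k - real j) + 1 / (real k + real j)) \<le> 1 / real k + ln (4 * real k - 1)"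
proof -
  obtain p where p: "k = Suc p"
    using assms by (cases k) auto
  have "(\<Sum>j<k. 1 / (real k + real j)) = (\<Sum>j<k. 1 / (real p + real j + 1))"
    by (simp add: p add_ac)
  then have "(\<Sum>j<k. 1 / (real k - real j) + 1 / (real k + real j)) = harm k + (harm (p + k) - harm p)"
    by (simp add: sum.distrib sum_inverse_diff_eq_harm sum_inverse_add_eq_harm_diff)
  also have "\<dots> = 1 / real k + harm (2 * p + 1)"
    by (simp add: p harm_Suc divide_inverse flip: mult_2)
  also have "harm (2 * p + 1) \<le> ln (4 * real k - 1)"
    using harm_le_ln[of "2 * p + 1"] by (simp add: p algebra_simps)
  finally show ?thesis by simp
qed

lemma sum_inverse_diff_minus_inverse_add_le:
  assumes "k \<le> n"
  shows "(\<Sum>j\<in>{k+1..n}. 1 / (real j - real k) - 1 / (real j + real k)) \<le> ln (4 * real k + 1)"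
proof -
  have "(\<Sum>j\<in>{k+1..n}. 1 / (real j - real k) - 1 / (real j + real k))
          = harm (n - k) + harm (2 * k) - harm (n - k + 2 * k)"
    using sum_inverse_diff_minus_inverse_add[of k "n - k"] assms by simp
  also have "\<dots> \<le> harm (2 * k)"
    by (simp add: harm_mono)
  also have "\<dots> \<le> ln (4 * real k + 1)"
    using harm_le_ln[of "2 * k"] by simp
  finally show ?thesis .
qed

lemma cheb_node_diff:
  assumes "n > 0"
  shows "cheb_node n i - cheb_node n j
           = 2 * sin ((real i + real j) * pi / (2 * real n)) * sin ((real i - real j) * pi / (2 * real n))"
proof -
  have "cheb_node n i - cheb_node n j = cos (real j * pi / real n) - cos (real i * pi / real n)"
    by (simp add: cheb_node_def)
  also have "\<dots> = 2 * sin ((real j * pi / real n + real i * pi / real n) / 2)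
                     * sin ((real i * pi / real n - real j * pi / real n) / 2)"
    by (rule cos_diff_cos)
  finally show ?thesis
    using assms by (simp add: add_divide_distrib diff_divide_distrib algebra_simps)
qed

lemma cheb_node_strict_mono:
  assumes "j < i" "i \<le> n"
  shows "cheb_node n j < cheb_node n i"
proof -
  have n: "real n > 0"
    using assms by simp
  have "cos (real i * pi / real n) < cos (real j * pi / real n)"
  proof (rule cos_monotone_0_pi)
    show "real j * pi / real n < real i * pi / real n"
      using assms n by (intro divide_strict_right_mono mult_strict_right_mono) auto
    show "real i * pi / real n \<le> pi"
      using assms n by (simp add: divide_le_eq)
  qed simp
  then show ?thesis
    by (simp add: cheb_node_def)
qed

lemma inverse_cheb_node_diff_le:
  assumes "n > 0" "0 < \<alpha>" "\<alpha> \<le> sin ((real i + real j) * pi / (2 * real n))"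
    and "0 < \<beta>" "\<beta> \<le> sin ((real i - real j) * pi / (2 * real n))"
  shows "1 / (cheb_node n i - cheb_node n j) \<le> 1 / (2 * \<alpha> * \<beta>)"
proof -
  have "2 * \<alpha> * \<beta> \<le> cheb_node n i - cheb_node n j"
    unfolding cheb_node_diff[OF assms(1)] mult.assoc
    using assms by (intro mult_left_mono mult_mono) auto
  moreover have "0 < 2 * \<alpha> * \<beta>"
    using assms by simp
  ultimately show ?thesis
    by (intro frac_le) auto
qed

lemma inverse_cheb_node_diff_below_le:
  assumes "j < k" "2 * k \<le> n"
  shows "1 / (cheb_node n k - cheb_node n j)
           \<le> real k / (2 * sin (real k * pi / real n) * sin (real k * pi / (2 * real n)))
              * (1 / (real k - real j) + 1 / (real k + real j))"
proof -
  define S1 where "S1 = sin (real k * pi / real n)"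
  define S2 where "S2 = sin (real k * pi / (2 * real n))"
  have n: "real n > 0" and k: "real k > 0" and jk: "real j < real k"
    using assms by auto
  have kn: "real k * pi / real n \<le> pi / 2"
    using assms n by (simp add: field_simps)
  have S1: "S1 > 0"
    unfolding S1_def using k n kn pi_gt_zero by (intro sin_gt_zero) (simp, linarith)
  have S2: "S2 > 0"
    unfolding S2_def
  proof (rule sin_gt_zero)
    show "0 < real k * pi / (2 * real n)"
      using k n by simp
    have "real k * pi / (2 * real n) \<le> real k * pi / real n"
      using k n by (intro divide_left_mono) auto
    also note kn
    also have "pi / 2 < pi"
      by simp
    finally show "real k * pi / (2 * real n) < pi" .
  qed
  have "(real k + real j) / (2 * real k) * S1
          = S1 / (real k * pi / real n) * ((real k + real j) * pi / (2 * real n))"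
    using n k by (simp add: field_simps)
  also have "\<dots> \<le> sin ((real k + real j) * pi / (2 * real n))"
    unfolding S1_def using kn jk n by (intro sin_ge_chord) (auto simp: field_simps)
  finally have \<alpha>: "(real k + real j) / (2 * real k) * S1 \<le> sin ((real k + real j) * pi / (2 * real n))" .
  have "(real k - real j) / real k * S2
          = S2 / (real k * pi / (2 * real n)) * ((real k - real j) * pi / (2 * real n))"
    using n k by (simp add: field_simps)
  also have "\<dots> \<le> sin ((real k - real j) * pi / (2 * real n))"
    unfolding S2_def using kn jk n by (intro sin_ge_chord) (auto simp: field_simps)
  finally have \<beta>: "(real k - real j) / real k * S2 \<le> sin ((real k - real j) * pi / (2 * real n))" .
  have "1 / (cheb_node n k - cheb_node n j)
          \<le> 1 / (2 * ((real k + real j) / (2 * real k) * S1) * ((real k - real j) / real k * S2))"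
    using \<alpha> \<beta> S1 S2 n k jk by (intro inverse_cheb_node_diff_le) auto
  also have "\<dots> = real k / (2 * S1 * S2) * (2 * real k / ((real k - real j) * (real k + real j)))"
  proof -
    define a b where "a = real k + real j" and "b = real k - real j"
    have "a > 0" "b > 0"
      using k jk by (auto simp: a_def b_def)
    then show ?thesis
      unfolding a_def[symmetric] b_def[symmetric] using S1 S2 k by (simp add: field_simps)
  qed
  also have "2 * real k / ((real k - real j) * (real k + real j)) = 1 / (real k - real j) + 1 / (real k + real j)"
    using k jk by (simp add: field_simps)
  finally show ?thesis
    unfolding S1_def S2_def .
qed

lemma inverse_cheb_node_diff_above_le:
  assumes "0 < k" "k < j" "j \<le> n" "2 * k \<le> n"
  shows "1 / (cheb_node n j - cheb_node n k)
           \<le> 3 * (real n)\<^sup>2 / (4 * sqrt 2 * real k) * (1 / (real j - real k) - 1 / (real j + real k))"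
proof -
  have n: "real n > 0" and k: "real k > 0"
    and jk: "real k < real j" "real j \<le> real n" "2 * real k \<le> real n"
    using assms by auto
  have sin_135: "sin (3 * pi / 4) = sqrt 2 / 2"
    using sin_pi_minus[of "pi / 4"] by (simp add: sin_45 field_simps)
  have "(real j + real k) * pi \<le> (3 / 2 * real n) * pi"
    using jk by (intro mult_right_mono) auto
  then have "sin (3 * pi / 4) / (3 * pi / 4) * ((real j + real k) * pi / (2 * real n))
               \<le> sin ((real j + real k) * pi / (2 * real n))"
    using n by (intro sin_ge_chord) (auto simp: field_simps)
  also have "sin (3 * pi / 4) / (3 * pi / 4) * ((real j + real k) * pi / (2 * real n))
               = sqrt 2 * (real j + real k) / (3 * real n)"
    unfolding sin_135 using n by (simp add: field_simps)
  finally have \<alpha>: "sqrt 2 * (real j + real k) / (3 * real n) \<le> sin ((real j + real k) * pi / (2 * real n))" .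
  have "(real j - real k) * pi \<le> real n * pi"
    using jk by (intro mult_right_mono) auto
  then have "sin (pi / 2) / (pi / 2) * ((real j - real k) * pi / (2 * real n))
               \<le> sin ((real j - real k) * pi / (2 * real n))"
    using jk n by (intro sin_ge_chord) (auto simp: field_simps)
  also have "sin (pi / 2) / (pi / 2) * ((real j - real k) * pi / (2 * real n)) = (real j - real k) / real n"
    using n by (simp add: field_simps)
  finally have \<beta>: "(real j - real k) / real n \<le> sin ((real j - real k) * pi / (2 * real n))" .
  have "1 / (cheb_node n j - cheb_node n k)
          \<le> 1 / (2 * (sqrt 2 * (real j + real k) / (3 * real n)) * ((real j - real k) / real n))"
    using \<alpha> \<beta> n jk by (intro inverse_cheb_node_diff_le) auto
  also have "\<dots> = 3 * (real n)\<^sup>2 / (2 * sqrt 2 * ((real j - real k) * (real j + real k)))"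
    using n jk by (simp add: field_simps power2_eq_square)
  also have "\<dots> = 3 * (real n)\<^sup>2 / (4 * sqrt 2 * real k) * (2 * real k / ((real j - real k) * (real j + real k)))"
    using k by simp
  also have "2 * real k / ((real j - real k) * (real j + real k)) = 1 / (real j - real k) - 1 / (real j + real k)"
    using k jk by (simp add: field_simps)
  finally show ?thesis .
qed

lemma inverse_cheb_node_diff_first_le:
  assumes "1 \<le> j" "j \<le> n"
  shows "1 / (cheb_node n j - cheb_node n 0) \<le> (real n)\<^sup>2 / 2 * (1 / (real j)\<^sup>2)"
proof -
  have n: "real n > 0" and j: "1 \<le> real j" "real j \<le> real n"
    using assms by auto
  have "real j / real n = sin (pi / 2) / (pi / 2) * (real j * pi / (2 * real n))"
    using n by (simp add: field_simps)
  also have "\<dots> \<le> sin (real j * pi / (2 * real n))"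
    using j n by (intro sin_ge_chord) (auto simp: field_simps)
  finally have "real j / real n \<le> sin ((real j + real 0) * pi / (2 * real n))"
               "real j / real n \<le> sin ((real j - real 0) * pi / (2 * real n))"
    by simp_all
  then have "1 / (cheb_node n j - cheb_node n 0) \<le> 1 / (2 * (real j / real n) * (real j / real n))"
    using n j by (intro inverse_cheb_node_diff_le) auto
  also have "\<dots> = (real n)\<^sup>2 / 2 * (1 / (real j)\<^sup>2)"
    using n j by (simp add: field_simps power2_eq_square)
  finally show ?thesis .
qed

lemma sin_mult_sin_ge:
  assumes "1 \<le> k" "2 * k \<le> n"
  shows "4 * sqrt 2 * (real k)\<^sup>2 / (real n)\<^sup>2
           \<le> 2 * sin (real k * pi / real n) * sin (real k * pi / (2 * real n))"
proof -
  have n: "real n > 0" and k: "real k > 0"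
    using assms by auto
  have "2 * real k / real n = sin (pi / 2) / (pi / 2) * (real k * pi / real n)"
    by simp
  also have "\<dots> \<le> sin (real k * pi / real n)"
    using assms n by (intro sin_ge_chord) (auto simp: field_simps)
  finally have S1: "2 * real k / real n \<le> sin (real k * pi / real n)" .
  have "sqrt 2 * real k / real n = sin (pi / 4) / (pi / 4) * (real k * pi / (2 * real n))"
    by (simp add: sin_45 field_simps)
  also have "\<dots> \<le> sin (real k * pi / (2 * real n))"
    using assms n by (intro sin_ge_chord) (auto simp: field_simps)
  finally have S2: "sqrt 2 * real k / real n \<le> sin (real k * pi / (2 * real n))" .
  have "4 * sqrt 2 * (real k)\<^sup>2 / (real n)\<^sup>2 = 2 * (2 * real k / real n) * (sqrt 2 * real k / real n)"
    by (simp add: power2_eq_square)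
  also have "\<dots> \<le> 2 * sin (real k * pi / real n) * sin (real k * pi / (2 * real n))"
  proof -
    have "0 < 2 * real k / real n" "0 < sqrt 2 * real k / real n"
      using k n by simp_all
    then show ?thesis
      unfolding mult.assoc using S1 S2 by (intro mult_left_mono mult_mono) auto
  qed
  finally show ?thesis .
qed

lemma sum_cheb_node_below_le:
  assumes "1 \<le> k" "2 * k \<le> n"
  shows "(\<Sum>j<k. 1 / (cheb_node n k - cheb_node n j))
           \<le> (1 + real k * ln (4 * real k - 1))
              / (2 * sin (real k * pi / real n) * sin (real k * pi / (2 * real n)))"
proof -
  define S where "S = 2 * sin (real k * pi / real n) * sin (real k * pi / (2 * real n))"
  have "0 < 4 * sqrt 2 * (real k)\<^sup>2 / (real n)\<^sup>2"
    using assms by simp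
  then have S: "S > 0"
    using sin_mult_sin_ge[OF assms] unfolding S_def by linarith
  have "(\<Sum>j<k. 1 / (cheb_node n k - cheb_node n j))
          \<le> (\<Sum>j<k. real k / S * (1 / (real k - real j) + 1 / (real k + real j)))"
    unfolding S_def using assms by (intro sum_mono inverse_cheb_node_diff_below_le) auto
  also have "\<dots> = real k / S * (\<Sum>j<k. 1 / (real k - real j) + 1 / (real k + real j))"
    by (simp add: sum_distrib_left)
  also have "\<dots> \<le> real k / S * (1 / real k + ln (4 * real k - 1))"
    using S by (intro mult_left_mono sum_inverse_diff_plus_inverse_add_le assms(1)) simp
  also have "\<dots> = (1 + real k * ln (4 * real k - 1)) / S"
    using assms S by (simp add: field_simps)
  finally show ?thesis
    unfolding S_def .
qed

lemma sum_cheb_node_below_bound_le: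
  assumes "1 \<le> k" "2 * k \<le> n"
  shows "(1 + real k * ln (4 * real k - 1))
           / (2 * sin (real k * pi / real n) * sin (real k * pi / (2 * real n)))
         \<le> (real n)\<^sup>2 / (4 * sqrt 2 * (real k)\<^sup>2) * (1 + real k * ln (4 * real k - 1))"
proof -
  have "0 \<le> 1 + real k * ln (4 * real k - 1)"
    using assms by (intro add_nonneg_nonneg mult_nonneg_nonneg ln_ge_zero) auto
  moreover have "0 < 4 * sqrt 2 * (real k)\<^sup>2 / (real n)\<^sup>2"
    using assms by simp
  ultimately have "(1 + real k * ln (4 * real k - 1))
                     / (2 * sin (real k * pi / real n) * sin (real k * pi / (2 * real n)))
                   \<le> (1 + real k * ln (4 * real k - 1)) / (4 * sqrt 2 * (real k)\<^sup>2 / (real n)\<^sup>2)"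
    using sin_mult_sin_ge[OF assms] by (intro frac_le) auto
  then show ?thesis
    by (simp add: ac_simps)
qed

lemma sum_cheb_node_above_le:
  assumes "1 \<le> k" "2 * k \<le> n"
  shows "(\<Sum>j\<in>{k+1..n}. 1 / (cheb_node n j - cheb_node n k))
           \<le> 3 * (real n)\<^sup>2 / (4 * sqrt 2 * real k) * ln (4 * real k + 1)"
proof -
  define K where "K = 3 * (real n)\<^sup>2 / (4 * sqrt 2 * real k)"
  have "(\<Sum>j\<in>{k+1..n}. 1 / (cheb_node n j - cheb_node n k))
          \<le> (\<Sum>j\<in>{k+1..n}. K * (1 / (real j - real k) - 1 / (real j + real k)))"
    unfolding K_def using assms by (intro sum_mono inverse_cheb_node_diff_above_le) auto
  also have "\<dots> = K * (\<Sum>j\<in>{k+1..n}. 1 / (real j - real k) - 1 / (real j + real k))"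
    by (simp add: sum_distrib_left)
  also have "\<dots> \<le> K * ln (4 * real k + 1)"
    using assms by (intro mult_left_mono sum_inverse_diff_minus_inverse_add_le) (auto simp: K_def)
  finally show ?thesis
    unfolding K_def .
qed

lemma sum_cheb_node_first_le:
  "(\<Sum>j\<in>{1..n}. 1 / (cheb_node n j - cheb_node n 0)) \<le> pi\<^sup>2 * (real n)\<^sup>2 / 12"
proof -
  have "(\<Sum>j\<in>{1..n}. 1 / (cheb_node n j - cheb_node n 0))
          \<le> (\<Sum>j\<in>{1..n}. (real n)\<^sup>2 / 2 * (1 / (real j)\<^sup>2))"
    by (intro sum_mono inverse_cheb_node_diff_first_le) auto
  also have "\<dots> = (real n)\<^sup>2 / 2 * (\<Sum>i<n. 1 / (real i + 1)\<^sup>2)"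
    by (simp add: sum_distrib_left sum.atLeast1_atMost_eq add.commute)
  also have "\<dots> \<le> (real n)\<^sup>2 / 2 * (pi\<^sup>2 / 6)"
  proof (rule mult_left_mono)
    have sums: "(\<lambda>i. 1 / (real i + 1)\<^sup>2) sums (pi\<^sup>2 / 6)"
      using inverse_squares_sums by (simp add: add.commute)
    show "(\<Sum>i<n. 1 / (real i + 1)\<^sup>2) \<le> pi\<^sup>2 / 6"
      unfolding sums_unique[OF sums] by (intro sum_le_suminf sums_summable[OF sums]) auto
  qed simp
  finally show ?thesis
    by (simp add: mult.commute)
qed

lemma sum_abs_inverse_cheb_node_diff_split:
  assumes "k \<le> n"
  shows "(\<Sum>j\<in>{0..n} - {k}. 1 / \<bar>cheb_node n k - cheb_node n j\<bar>)
           = (\<Sum>j<k. 1 / (cheb_node n k - cheb_node n j))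
             + (\<Sum>j\<in>{k+1..n}. 1 / (cheb_node n j - cheb_node n k))"
proof -
  have split: "{0..n} - {k} = {..<k} \<union> {k+1..n}"
    using assms by auto
  have "(\<Sum>j\<in>{0..n} - {k}. 1 / \<bar>cheb_node n k - cheb_node n j\<bar>)
          = (\<Sum>j<k. 1 / \<bar>cheb_node n k - cheb_node n j\<bar>)
            + (\<Sum>j\<in>{k+1..n}. 1 / \<bar>cheb_node n k - cheb_node n j\<bar>)"
    unfolding split by (rule sum.union_disjoint) auto
  also have "(\<Sum>j<k. 1 / \<bar>cheb_node n k - cheb_node n j\<bar>) = (\<Sum>j<k. 1 / (cheb_node n k - cheb_node n j))"
  proof (rule sum.cong[OF refl])
    fix j
    assume "j \<in> {..<k}"
    then have "cheb_node n j < cheb_node n k"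
      using assms by (intro cheb_node_strict_mono) auto
    then show "1 / \<bar>cheb_node n k - cheb_node n j\<bar> = 1 / (cheb_node n k - cheb_node n j)"
      by simp
  qed
  also have "(\<Sum>j\<in>{k+1..n}. 1 / \<bar>cheb_node n k - cheb_node n j\<bar>)
               = (\<Sum>j\<in>{k+1..n}. 1 / (cheb_node n j - cheb_node n k))"
  proof (rule sum.cong[OF refl])
    fix j
    assume "j \<in> {k+1..n}"
    then have "cheb_node n k < cheb_node n j"
      by (intro cheb_node_strict_mono) auto
    then show "1 / \<bar>cheb_node n k - cheb_node n j\<bar> = 1 / (cheb_node n j - cheb_node n k)"
      by simp
  qed
  finally show ?thesis .
qed

lemma four_mult_le_three_power_plus_one: "4 * k \<le> (3::nat) ^ k + 1"
proof (induction k)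
  case (Suc k)
  then show ?case
    by (cases k) auto
qed simp

lemma four_mult_plus_one_le_five_power: "4 * k + 1 \<le> (5::nat) ^ k"
proof (induction k)
  case (Suc k)
  have "1 \<le> (5::nat) ^ k"
    by simp
  with Suc show ?case
    by simp
qed simp

lemma ln_four_mult_minus_one_le:
  assumes "1 \<le> k"
  shows "ln (4 * real k - 1) \<le> real k * ln 3"
proof -
  have "4 * real k - 1 \<le> 3 ^ k"
    using four_mult_le_three_power_plus_one[of k]
    by (metis (mono_tags) diff_le_eq of_nat_add of_nat_le_iff of_nat_mult of_nat_numeral of_nat_power of_nat_1)
  then have "ln (4 * real k - 1) \<le> ln (3 ^ k)"
    using assms by (intro ln_mono) auto
  then show ?thesis
    by (simp add: ln_realpow)
qed

lemma ln_four_mult_plus_one_le: "ln (4 * real k + 1) \<le> real k * ln 5"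
proof -
  have "4 * real k + 1 \<le> 5 ^ k"
    using four_mult_plus_one_le_five_power[of k]
    by (metis (mono_tags) of_nat_add of_nat_le_iff of_nat_mult of_nat_numeral of_nat_power of_nat_1)
  then have "ln (4 * real k + 1) \<le> ln (5 ^ k)"
    by (intro ln_mono) auto
  then show ?thesis
    by (simp add: ln_realpow)
qed

lemma ln_3_plus_3_ln_5_less: "ln 3 + 3 * ln 5 < (6::real)"
proof -
  have "exp 1 \<ge> (2718 / 1000 :: real)"
    using e_approx_32 by (simp add: abs_if split: if_split_asm)
  then have "(2718 / 1000) ^ 6 \<le> exp (1::real) ^ 6"
    by (intro power_mono) auto
  then have "(2718 / 1000) ^ 6 \<le> exp (6::real)"
    by (simp add: exp_of_nat_mult[of 6 1, symmetric])
  moreover have "(375::real) < (2718 / 1000) ^ 6"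
    by (simp add: eval_nat_numeral)
  ultimately have "(375::real) < exp 6"
    by linarith
  then have "ln (375::real) < 6"
    by (simp add: ln_less_cancel_iff[symmetric, of _ "exp 6"])
  moreover have "ln (375::real) = ln 3 + 3 * ln 5"
    using ln_mult[of 3 "5 ^ 3"] ln_realpow[of 5 3] by simp
  ultimately show ?thesis
    by simp
qed

lemma below_above_bounds_sum_le:
  assumes "1 \<le> k"
  shows "(real n)\<^sup>2 / (4 * sqrt 2 * (real k)\<^sup>2) * (1 + real k * ln (4 * real k - 1))
           + 3 * (real n)\<^sup>2 / (4 * sqrt 2 * real k) * ln (4 * real k + 1)
         \<le> (real n)\<^sup>2 / (4 * sqrt 2) * (1 + ln 3 + 3 * ln 5)"
proof -
  have k: "real k \<ge> 1"
    using assms by simp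
  have "1 / (real k)\<^sup>2 \<le> 1"
    using k by (simp add: divide_le_eq)
  moreover have "ln (4 * real k - 1) / real k \<le> ln 3"
    using ln_four_mult_minus_one_le[OF assms] k by (simp add: divide_le_eq mult.commute)
  moreover have "ln (4 * real k + 1) / real k \<le> ln 5"
    using ln_four_mult_plus_one_le[of k] k by (simp add: divide_le_eq mult.commute)
  ultimately have "1 / (real k)\<^sup>2 + ln (4 * real k - 1) / real k + 3 * (ln (4 * real k + 1) / real k)
                     \<le> 1 + ln 3 + 3 * ln 5"
    by linarith
  then have "(real n)\<^sup>2 / (4 * sqrt 2)
               * (1 / (real k)\<^sup>2 + ln (4 * real k - 1) / real k + 3 * (ln (4 * real k + 1) / real k))
             \<le> (real n)\<^sup>2 / (4 * sqrt 2) * (1 + ln 3 + 3 * ln 5)"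
    by (rule mult_left_mono) simp
  then show ?thesis
    using k by (simp add: field_simps power2_eq_square)
qed

lemma sqrt_2_gt: "sqrt 2 > (1.4::real)"
  by (rule real_less_rsqrt) (simp add: power2_eq_square)

lemma uniform_bound_less:
  assumes "n > 0"
  shows "(real n)\<^sup>2 / (4 * sqrt 2) * (1 + ln 3 + 3 * ln 5) < 1.3 * (real n)\<^sup>2"
proof -
  have "1 + ln 3 + 3 * ln 5 < 1.3 * (4 * sqrt 2)"
    using ln_3_plus_3_ln_5_less sqrt_2_gt by linarith
  then have "(1 + ln 3 + 3 * ln 5) / (4 * sqrt 2) < 1.3"
    by (simp add: divide_less_eq)
  then have "(real n)\<^sup>2 * ((1 + ln 3 + 3 * ln 5) / (4 * sqrt 2)) < (real n)\<^sup>2 * 1.3"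
    using assms by (intro mult_strict_left_mono) auto
  then show ?thesis
    by (simp add: field_simps)
qed

lemma pi_squared_bound_less:
  assumes "n > 0"
  shows "pi\<^sup>2 * (real n)\<^sup>2 / 12 < 0.9 * (real n)\<^sup>2"
proof -
  have "pi\<^sup>2 \<le> 3.15\<^sup>2"
    using pi_approx pi_gt_zero by (intro power_mono) auto
  then have "pi\<^sup>2 / 12 < 0.9"
    by (simp add: power2_eq_square)
  then have "(real n)\<^sup>2 * (pi\<^sup>2 / 12) < (real n)\<^sup>2 * 0.9"
    using assms by (intro mult_strict_left_mono) auto
  then show ?thesis
    by (simp add: field_simps)
qed

theorem lemma8:
  fixes n :: nat
  assumes "n \<ge> 2"
  shows "(\<forall>k::nat. 1 \<le> k \<and> 2 * k \<le> n \<longrightarrow>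
            (\<Sum>j<k. 1 / (cheb_node n k - cheb_node n j))
              \<le> (1 + real k * ln (4 * real k - 1))
                 / (2 * sin (real k * pi / real n) * sin (real k * pi / (2 * real n)))
          \<and> (1 + real k * ln (4 * real k - 1))
                 / (2 * sin (real k * pi / real n) * sin (real k * pi / (2 * real n)))
              \<le> (real n)\<^sup>2 / (4 * sqrt 2 * (real k)\<^sup>2) * (1 + real k * ln (4 * real k - 1))
          \<and> (\<Sum>j\<in>{k+1..n}. 1 / (cheb_node n j - cheb_node n k))
              \<le> 3 * (real n)\<^sup>2 / (4 * sqrt 2 * real k) * ln (4 * real k + 1)
          \<and> (\<Sum>j\<in>{0..n} - {k}. 1 / \<bar>cheb_node n k - cheb_node n j\<bar>)
              \<le> (real n)\<^sup>2 / (4 * sqrt 2) * (1 + ln 3 + 3 * ln 5)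
          \<and> (real n)\<^sup>2 / (4 * sqrt 2) * (1 + ln 3 + 3 * ln 5) < 1.3 * (real n)\<^sup>2)
       \<and> (\<Sum>j\<in>{1..n}. 1 / (cheb_node n j - cheb_node n 0)) \<le> pi\<^sup>2 * (real n)\<^sup>2 / 12
       \<and> pi\<^sup>2 * (real n)\<^sup>2 / 12 < 0.9 * (real n)\<^sup>2"
proof (intro conjI allI impI)
  have n: "n > 0"
    using assms by simp
  fix k :: nat
  assume "1 \<le> k \<and> 2 * k \<le> n"
  then have k: "1 \<le> k" "2 * k \<le> n"
    by auto
  note below = sum_cheb_node_below_le[OF k] sum_cheb_node_below_bound_le[OF k]
  note above = sum_cheb_node_above_le[OF k]
  show "(\<Sum>j<k. 1 / (cheb_node n k - cheb_node n j))
          \<le> (1 + real k * ln (4 * real k - 1))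
             / (2 * sin (real k * pi / real n) * sin (real k * pi / (2 * real n)))"
    by (fact below(1))
  show "(1 + real k * ln (4 * real k - 1))
          / (2 * sin (real k * pi / real n) * sin (real k * pi / (2 * real n)))
        \<le> (real n)\<^sup>2 / (4 * sqrt 2 * (real k)\<^sup>2) * (1 + real k * ln (4 * real k - 1))"
    by (fact below(2))
  show "(\<Sum>j\<in>{k+1..n}. 1 / (cheb_node n j - cheb_node n k))
          \<le> 3 * (real n)\<^sup>2 / (4 * sqrt 2 * real k) * ln (4 * real k + 1)"
    by (fact above)
  show "(\<Sum>j\<in>{0..n} - {k}. 1 / \<bar>cheb_node n k - cheb_node n j\<bar>)
          \<le> (real n)\<^sup>2 / (4 * sqrt 2) * (1 + ln 3 + 3 * ln 5)"
    using sum_abs_inverse_cheb_node_diff_split[of k n] below above below_above_bounds_sum_le[OF k(1), of n] k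
    by linarith
  show "(real n)\<^sup>2 / (4 * sqrt 2) * (1 + ln 3 + 3 * ln 5) < 1.3 * (real n)\<^sup>2"
    using uniform_bound_less[OF n] .
next
  show "(\<Sum>j\<in>{1..n}. 1 / (cheb_node n j - cheb_node n 0)) \<le> pi\<^sup>2 * (real n)\<^sup>2 / 12"
    by (rule sum_cheb_node_first_le)
  show "pi\<^sup>2 * (real n)\<^sup>2 / 12 < 0.9 * (real n)\<^sup>2"
    using assms by (intro pi_squared_bound_less) simp
qed

end
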